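(* Let $(\Omega,\mathcal{A})$ be a measurable space, $\nu:\mathcal{A}\to[0,\infty)$ a (finite, nonnegative) measure, $X$ a Banach space and $\mathcal{F}\subset\mathcal{A}$ a sub-$\sigma$-algebra. Let $\Phi:\Omega\to X$ be Pettis integrable with respect to $\nu$, and assume that the conditional expectation $\Psi=\mathbb{E}(\Phi\mid\mathcal{F})$ exists. Let $\phi:\Omega\to\mathbb{R}$ be $\mathcal{F}$-measurable and such that the product $\phi\Phi:\Omega\to X$ is Pettis integrable with respect to $\nu$. Then the conditional expectation of $\phi\Phi$ with respect to $\mathcal{F}$ exists and $$\mathbb{E}(\phi\Phi\mid\mathcal{F})=\phi\,\mathbb{E}(\Phi\mid\mathcal{F}),$$ that is, $\phi\Psi$ is weakly $\mathcal{F}$-measurable, Pettis integrable with respect to $\nu$, and $(Pe)\int_E\phi\Phi\,d\nu=(Pe)\int_E\phi\Psi\,d\nu$ for every $E\in\mathcal{F}$.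
   Context: $X^*$ denotes the dual of the Banach space $X$. A function $\Phi:\Omega\to X$ is Pettis integrable with respect to $\nu$ if it is weakly measurable (i.e. $x^*\circ\Phi$ is measurable for every $x^*\in X^*$), $x^*\circ\Phi$ is $\nu$-integrable for every $x^*\in X^*$, and for every $D\in\mathcal{A}$ there is $x_D\in X$ with $x^*(x_D)=\int_D x^*(\Phi)\,d\nu$ for all $x^*\in X^*$; one writes $x_D=(Pe)\int_D\Phi\,d\nu$. For a Pettis integrable $\Phi$ and a sub-$\sigma$-algebra $\mathcal{F}\subset\mathcal{A}$, the conditional expectation $\mathbb{E}(\Phi\mid\mathcal{F})$ is (if it exists) a weakly $\mathcal{F}$-measurable function $\Psi:\Omega\to X$ that is Pettis integrable with respect to $\nu$ and satisfies $(Pe)\int_E\Phi\,d\nu=(Pe)\int_E\Psi\,d\nu$ for every $E\in\mathcal{F}$. *)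

theory Defs
  imports "HOL-Probability.Conditional_Expectation"
begin

text \<open>Elements of the dual X* of a real Banach space X are the bounded linear
  functionals X \<Rightarrow> real.\<close>

definition weakly_measurable :: "'a measure \<Rightarrow> ('a \<Rightarrow> 'b::real_normed_vector) \<Rightarrow> bool" where
  "weakly_measurable M \<Phi> \<longleftrightarrow>
     (\<forall>x'::'b \<Rightarrow> real. bounded_linear x' \<longrightarrow> (\<lambda>\<omega>. x' (\<Phi> \<omega>)) \<in> borel_measurable M)"

definition pettis_integrable :: "'a measure \<Rightarrow> ('a \<Rightarrow> 'b::real_normed_vector) \<Rightarrow> bool" where
  "pettis_integrable M \<Phi> \<longleftrightarrow>
     weakly_measurable M \<Phi> \<and>
     (\<forall>x'::'b \<Rightarrow> real. bounded_linear x' \<longrightarrow> integrable M (\<lambda>\<omega>. x' (\<Phi> \<omega>))) \<and>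
     (\<forall>D\<in>sets M. \<exists>xD. \<forall>x'::'b \<Rightarrow> real. bounded_linear x' \<longrightarrow>
         x' xD = (LINT \<omega>:D|M. x' (\<Phi> \<omega>)))"

definition pettis_integral :: "'a measure \<Rightarrow> 'a set \<Rightarrow> ('a \<Rightarrow> 'b::real_normed_vector) \<Rightarrow> 'b" where
  "pettis_integral M D \<Phi> =
     (THE xD. \<forall>x'::'b \<Rightarrow> real. bounded_linear x' \<longrightarrow> x' xD = (LINT \<omega>:D|M. x' (\<Phi> \<omega>)))"

definition is_pettis_cond_exp ::
  "'a measure \<Rightarrow> 'a measure \<Rightarrow> ('a \<Rightarrow> 'b::real_normed_vector) \<Rightarrow> ('a \<Rightarrow> 'b) \<Rightarrow> bool" where
  "is_pettis_cond_exp M F \<Phi> \<Psi> \<longleftrightarrow>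
     weakly_measurable F \<Psi> \<and> pettis_integrable M \<Psi> \<and>
     (\<forall>E\<in>sets F. pettis_integral M E \<Phi> = pettis_integral M E \<Psi>)"

end

theory Submission
  imports Defs "HOL-Analysis.Analysis"
begin

text \<open>For a bounded functional x', x' \<circ> \<Psi> is a version of the real conditional expectation
  of x' \<circ> \<Phi>, so the scalar pull-out property E(\<phi> u | F) = \<phi> E(u | F) shows that x'(\<phi>\<Psi>) is
  integrable and has the same integrals as x'(\<phi>\<Phi>) over every E \<in> F. What remains is that \<phi>\<Psi>
  has Pettis integrals over every D \<in> A, not only over the sets of F. On F-sets these integrals are
  those of \<phi>\<Phi>, so \<phi>\<Psi> is Pettis integrable for \<nu> restricted to F, and
  \<integral>_D x'(\<phi>\<Psi>) d\<nu> = \<integral> E(1_D | F) x'(\<phi>\<Psi>) d\<nu>. It therefore suffices that multiplication by a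
  measurable [0,1]-valued function preserves Pettis integrability. Approximating the multiplier
  uniformly by step functions gives vectors that form a Cauchy sequence in X, because
  sup \<parallel>x'\<parallel>\<le>1 \<integral>|x' \<circ> g| is finite by the uniform boundedness principle; its limit is the
  required integral. Norms are computed with norming functionals from the Hahn-Banach theorem.\<close>

section \<open>Norming functionals\<close>

text \<open>A norm-dominated subspace of X \<times> \<real> is the graph of a linear functional on a subspace of X
  bounded by the norm; Zorn's lemma and one-dimensional extensions make it total.\<close>

definition norm_dominated :: "('b::real_normed_vector \<times> real) set \<Rightarrow> bool" where
  "norm_dominated G \<longleftrightarrow> subspace G \<and> (\<forall>(x, a)\<in>G. a \<le> norm x)"

lemma norm_dominated_unique:
  assumes "norm_dominated G" "(x, a) \<in> G" "(x, b) \<in> G"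
  shows "a = b"
proof -
  have "(x, a) - (x, b) \<in> G" "(x, b) - (x, a) \<in> G"
    using assms subspace_diff[of G] unfolding norm_dominated_def by blast+
  then have "a - b \<le> 0" "b - a \<le> 0"
    using assms(1) unfolding norm_dominated_def by fastforce+
  then show ?thesis by simp
qed

lemma norm_dominated_separating_value:
  assumes G: "norm_dominated G"
  obtains c where "\<And>x a. (x, a) \<in> G \<Longrightarrow> a - norm (x - z) \<le> c"
    and "\<And>y b. (y, b) \<in> G \<Longrightarrow> c \<le> norm (y + z) - b"
proof -
  have sub: "subspace G" and dom: "\<And>x a. (x, a) \<in> G \<Longrightarrow> a \<le> norm x"
    using G by (auto simp: norm_dominated_def)
  define L where "L = {a - norm (x - z) | x a. (x, a) \<in> G}"
  have L_le: "l \<le> norm (y + z) - b" if "l \<in> L" "(y, b) \<in> G" for l y b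
  proof -
    obtain x a where l: "l = a - norm (x - z)" "(x, a) \<in> G" using \<open>l \<in> L\<close> L_def by auto
    have "a + b \<le> norm (x + y)"
      using dom subspace_add[OF sub l(2) \<open>(y, b) \<in> G\<close>] by simp
    also have "\<dots> \<le> norm (x - z) + norm (y + z)"
      using norm_triangle_ineq[of "x - z" "y + z"] by simp
    finally show ?thesis using l by simp
  qed
  have "(0, 0) \<in> G" using subspace_0[OF sub] by (simp add: zero_prod_def)
  then have "L \<noteq> {}" "bdd_above L"
    using L_le by (fastforce simp: L_def bdd_above_def)+
  then show ?thesis
    using L_le by (intro that[of "Sup L"] cSup_upper cSup_least) (auto simp: L_def)
qed

lemma norm_dominated_extension_value:
  assumes G: "norm_dominated G"
  obtains c where "\<And>x a t. (x, a) \<in> G \<Longrightarrow> a + t * c \<le> norm (x + t *\<^sub>R z)"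
proof -
  obtain c where below: "\<And>x a. (x, a) \<in> G \<Longrightarrow> a - norm (x - z) \<le> c"
    and above: "\<And>y b. (y, b) \<in> G \<Longrightarrow> c \<le> norm (y + z) - b"
    using norm_dominated_separating_value[OF G, of z] by blast
  have sub: "subspace G"
    using G by (simp add: norm_dominated_def)
  have scale: "(r *\<^sub>R x, r * a) \<in> G" if "(x, a) \<in> G" for r x a
    using subspace_scale[OF sub that, of r] by simp
  have "a + t * c \<le> norm (x + t *\<^sub>R z)" if xa: "(x, a) \<in> G" for x a t
  proof (cases t "0::real" rule: linorder_cases)
    case less
    define r where "r = inverse (- t)"
    have "r * a - norm (r *\<^sub>R x - z) \<le> c"
      using below[OF scale[OF xa]] .
    then have "- t * (r * a - norm (r *\<^sub>R x - z)) \<le> - t * c"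
      using less by (intro mult_left_mono) auto
    moreover have "norm (x + t *\<^sub>R z) = - t * norm (r *\<^sub>R x - z)"
    proof -
      have "x + t *\<^sub>R z = (- t) *\<^sub>R (r *\<^sub>R x - z)"
        using less by (simp add: r_def scaleR_diff_right)
      then show ?thesis using less by simp
    qed
    moreover have "- t * (r * a) = a"
      using less by (simp add: r_def)
    ultimately show ?thesis
      by (simp add: right_diff_distrib)
  next
    case equal
    then show ?thesis using G xa by (auto simp: norm_dominated_def)
  next
    case greater
    define r where "r = inverse t"
    have "c \<le> norm (r *\<^sub>R x + z) - r * a"
      using above[OF scale[OF xa]] .
    then have "t * c \<le> t * (norm (r *\<^sub>R x + z) - r * a)"
      using greater by (intro mult_left_mono) auto
    moreover have "norm (x + t *\<^sub>R z) = t * norm (r *\<^sub>R x + z)"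
    proof -
      have "x + t *\<^sub>R z = t *\<^sub>R (r *\<^sub>R x + z)"
        using greater by (simp add: r_def scaleR_add_right)
      then show ?thesis using greater by simp
    qed
    moreover have "t * (r * a) = a"
      using greater by (simp add: r_def)
    ultimately show ?thesis
      by (simp add: right_diff_distrib)
  qed
  then show ?thesis using that by blast
qed

lemma norm_dominated_extend:
  assumes G: "norm_dominated G"
  obtains G' where "norm_dominated G'" "G \<subseteq> G'" "\<exists>c. (z, c) \<in> G'"
proof -
  obtain c where c: "\<And>x a t. (x, a) \<in> G \<Longrightarrow> a + t * c \<le> norm (x + t *\<^sub>R z)"
    using norm_dominated_extension_value[OF G] by blast
  define G' where "G' = {p + q | p q. p \<in> G \<and> q \<in> span {(z, c)}}"
  have "subspace G'"
    unfolding G'_def using G by (intro subspace_sums subspace_span) (simp add: norm_dominated_def)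
  moreover have "a \<le> norm x" if "(x, a) \<in> G'" for x a
    using that c by (auto simp: G'_def span_singleton)
  ultimately have "norm_dominated G'"
    unfolding norm_dominated_def by auto
  moreover have "G \<subseteq> G'"
  proof
    fix p assume "p \<in> G"
    moreover have "p = p + 0" "0 \<in> span {(z, c)}" by (simp_all add: span_zero)
    ultimately show "p \<in> G'" unfolding G'_def by blast
  qed
  moreover have "(z, c) \<in> G'"
  proof -
    have "0 \<in> G" using G subspace_0 by (auto simp: norm_dominated_def)
    moreover have "(z, c) = 0 + (z, c)" "(z, c) \<in> span {(z, c)}" by (simp_all add: span_base)
    ultimately show ?thesis unfolding G'_def by blast
  qed
  ultimately show ?thesis
    using that by blast
qed

lemma norm_dominated_chain_Union:
  assumes "\<C> \<noteq> {}" "subset.chain {G. norm_dominated G} \<C>"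
  shows "norm_dominated (\<Union>\<C>)"
proof -
  have dom: "\<And>G. G \<in> \<C> \<Longrightarrow> norm_dominated G"
    and tot: "\<And>G H. G \<in> \<C> \<Longrightarrow> H \<in> \<C> \<Longrightarrow> G \<subseteq> H \<or> H \<subseteq> G"
    using assms(2) by (auto simp: subset.chain_def)
  have "p + q \<in> \<Union>\<C>" if pq: "p \<in> \<Union>\<C>" "q \<in> \<Union>\<C>" for p q
  proof -
    obtain G H where "G \<in> \<C>" "H \<in> \<C>" "p \<in> G" "q \<in> H" using pq by blast
    then show ?thesis
      using tot[of G H] dom subspace_add unfolding norm_dominated_def by blast
  qed
  moreover have "r *\<^sub>R p \<in> \<Union>\<C>" if "p \<in> \<Union>\<C>" for r p
    using that dom subspace_scale unfolding norm_dominated_def by blast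
  moreover have "0 \<in> \<Union>\<C>"
    using assms(1) dom subspace_0 unfolding norm_dominated_def by blast
  moreover have "a \<le> norm x" if "(x, a) \<in> \<Union>\<C>" for x a
    using that dom unfolding norm_dominated_def by blast
  ultimately show ?thesis
    unfolding norm_dominated_def subspace_def by blast
qed

lemma exists_total_norm_dominated:
  fixes x0 :: "'b::real_normed_vector"
  obtains G where "norm_dominated G" "(x0, norm x0) \<in> G" "\<And>y. \<exists>a. (y, a) \<in> G"
proof -
  define \<A> where "\<A> = {G. norm_dominated G \<and> (x0, norm x0) \<in> G}"
  have "a \<le> norm x" if xa: "(x, a) \<in> span {(x0, norm x0)}" for x a
  proof -
    obtain t where "x = t *\<^sub>R x0" "a = t * norm x0"
      using xa by (auto simp: span_singleton)
    then show ?thesis by (simp add: mult_right_mono)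
  qed
  then have "span {(x0, norm x0)} \<in> \<A>"
    unfolding \<A>_def norm_dominated_def by (auto simp: subspace_span span_base)
  then have "\<exists>G\<in>\<A>. \<forall>H\<in>\<A>. G \<subseteq> H \<longrightarrow> H = G"
  proof (intro subset_Zorn_nonempty)
    fix \<C> assume "\<C> \<noteq> {}" "subset.chain \<A> \<C>"
    moreover have "subset.chain {G. norm_dominated G} \<C>"
      using \<open>subset.chain \<A> \<C>\<close> by (auto simp: subset.chain_def \<A>_def)
    moreover have "(x0, norm x0) \<in> \<Union>\<C>"
      using calculation by (auto simp: \<A>_def subset.chain_def)
    ultimately show "\<Union>\<C> \<in> \<A>"
      using norm_dominated_chain_Union by (simp add: \<A>_def)
  qed blast
  then obtain G where G: "norm_dominated G" "(x0, norm x0) \<in> G"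
    and maximal: "\<And>H. norm_dominated H \<Longrightarrow> G \<subseteq> H \<Longrightarrow> H = G"
    unfolding \<A>_def by blast
  have "\<exists>a. (y, a) \<in> G" for y
    using norm_dominated_extend[OF G(1), of y] maximal by metis
  with G show ?thesis
    using that by blast
qed

lemma exists_norming_functional:
  fixes x0 :: "'b::real_normed_vector"
  obtains f :: "'b \<Rightarrow> real"
  where "bounded_linear f" "\<And>y. \<bar>f y\<bar> \<le> norm y" "f x0 = norm x0"
proof -
  obtain G where G: "norm_dominated G" "(x0, norm x0) \<in> G" and total: "\<And>y. \<exists>a. (y, a) \<in> G"
    using exists_total_norm_dominated by blast
  have sub: "subspace G" and dom: "\<And>x a. (x, a) \<in> G \<Longrightarrow> a \<le> norm x"
    using G(1) by (auto simp: norm_dominated_def)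
  define f where "f y = (THE a. (y, a) \<in> G)" for y
  have unique: "\<exists>!a. (y, a) \<in> G" for y
    using total norm_dominated_unique[OF G(1)] by metis
  have graph: "(y, a) \<in> G \<longleftrightarrow> a = f y" for y a
    using theI'[OF unique[of y]] the1_equality[OF unique[of y]] unfolding f_def by blast
  have add: "f (x + y) = f x + f y" for x y
    using subspace_add[OF sub, of "(x, f x)" "(y, f y)"] graph by simp
  have scale: "f (r *\<^sub>R x) = r *\<^sub>R f x" for r x
    using subspace_scale[OF sub, of "(x, f x)" r] graph by simp
  have bound: "\<bar>f y\<bar> \<le> norm y" for y
  proof -
    have "f y \<le> norm y" "f (- y) \<le> norm (- y)"
      using dom graph by blast+
    moreover have "f (- y) = - f y"
      using scale[of "-1" y] by simp
    ultimately show ?thesis by simp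
  qed
  have "bounded_linear f"
    by (rule bounded_linear_intro[where K = 1]) (use add scale bound in auto)
  moreover have "f x0 = norm x0"
    using G(2) graph by simp
  ultimately show ?thesis
    using that bound by blast
qed

section \<open>Weakly bounded sets\<close>

lemma closed_dual_sublevel:
  fixes Y :: "'b::real_normed_vector set"
  shows "closed {z :: 'b \<Rightarrow>\<^sub>L real. \<forall>y\<in>Y. \<bar>blinfun_apply z y\<bar> \<le> r}"
proof -
  have "closed {z :: 'b \<Rightarrow>\<^sub>L real. \<bar>blinfun_apply z y\<bar> \<le> r}" for y
    by (intro closed_Collect_le continuous_on_rabs linear_continuous_on
        blinfun.bounded_linear_left continuous_on_const)
  then have "closed (\<Inter>y\<in>Y. {z :: 'b \<Rightarrow>\<^sub>L real. \<bar>blinfun_apply z y\<bar> \<le> r})"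
    by blast
  moreover have "(\<Inter>y\<in>Y. {z :: 'b \<Rightarrow>\<^sub>L real. \<bar>blinfun_apply z y\<bar> \<le> r})
      = {z. \<forall>y\<in>Y. \<bar>blinfun_apply z y\<bar> \<le> r}"
    by blast
  ultimately show ?thesis by simp
qed

lemma weakly_bounded_dual_ball:
  fixes Y :: "'b::real_normed_vector set"
  assumes "\<And>f::'b \<Rightarrow> real. bounded_linear f \<Longrightarrow> \<exists>k. \<forall>y\<in>Y. \<bar>f y\<bar> \<le> k"
  obtains n :: nat and z0 r
  where "r > 0" "ball z0 r \<subseteq> {z :: 'b \<Rightarrow>\<^sub>L real. \<forall>y\<in>Y. \<bar>blinfun_apply z y\<bar> \<le> real n}"
proof -
  define C where "C n = {z :: 'b \<Rightarrow>\<^sub>L real. \<forall>y\<in>Y. \<bar>blinfun_apply z y\<bar> \<le> real n}" for n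
  have "z \<in> \<Union>(range C)" for z
  proof -
    obtain k where k: "\<forall>y\<in>Y. \<bar>blinfun_apply z y\<bar> \<le> k"
      using assms[of "blinfun_apply z"] blinfun.bounded_linear_right by blast
    obtain n :: nat where "k \<le> real n"
      using real_arch_simple by blast
    with k have "z \<in> C n"
      unfolding C_def by force
    then show ?thesis by blast
  qed
  then have "\<Union>(range C) = UNIV" by blast
  then have "\<exists>n. interior (C n) \<noteq> {}"
    using Baire_category_alt[of euclidean "range C"] completely_metrizable_space_euclidean
      closed_dual_sublevel by (fastforce simp: C_def)
  then obtain n z0 r where "r > 0" "ball z0 r \<subseteq> C n"
    using mem_interior by blast
  then show ?thesis
    using that unfolding C_def by blast
qed

lemma weakly_bounded_imp_bounded:
  fixes Y :: "'b::real_normed_vector set"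
  assumes "\<And>f::'b \<Rightarrow> real. bounded_linear f \<Longrightarrow> \<exists>k. \<forall>y\<in>Y. \<bar>f y\<bar> \<le> k"
  shows "bounded Y"
proof -
  obtain n :: nat and z0 r where r: "r > 0"
    and ball: "ball z0 r \<subseteq> {z. \<forall>y\<in>Y. \<bar>blinfun_apply z y\<bar> \<le> real n}"
    by (rule weakly_bounded_dual_ball[OF assms])
  have unit: "\<bar>f y\<bar> \<le> 4 * real n / r"
    if f: "bounded_linear f" "\<And>x. \<bar>f x\<bar> \<le> norm x" and y: "y \<in> Y" for f y
  proof -
    have norm_f: "norm (Blinfun f) \<le> 1"
      using f by (intro norm_blinfun_bound) (auto simp: bounded_linear_Blinfun_apply)
    have "z0 + (r / 2) *\<^sub>R Blinfun f \<in> ball z0 r"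
      using r norm_f by (simp add: dist_norm mult_left_le)
    then have "\<bar>blinfun_apply (z0 + (r / 2) *\<^sub>R Blinfun f) y\<bar> \<le> real n"
      using ball y by blast
    then have "\<bar>blinfun_apply z0 y + (r / 2) * f y\<bar> \<le> real n"
      using f(1) by (simp add: blinfun.add_left blinfun.scaleR_left bounded_linear_Blinfun_apply)
    moreover have "z0 \<in> ball z0 r"
      using r by simp
    then have "\<bar>blinfun_apply z0 y\<bar> \<le> real n"
      using ball y by blast
    ultimately have "(r / 2) * \<bar>f y\<bar> \<le> 2 * real n"
      using r by (auto simp: abs_mult)
    then show ?thesis
      using r by (simp add: field_simps)
  qed
  have "norm y \<le> 4 * real n / r" if "y \<in> Y" for y
  proof -
    obtain f :: "'b \<Rightarrow> real" where "bounded_linear f" "\<And>x. \<bar>f x\<bar> \<le> norm x" "f y = norm y"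
      using exists_norming_functional by blast
    then show ?thesis
      using unit[of f y] that by simp
  qed
  then show ?thesis
    by (auto simp: bounded_iff)
qed

section \<open>Pettis integrals\<close>

lemma bounded_linear_functional_scaleR:
  fixes x' :: "'b::real_normed_vector \<Rightarrow> real"
  assumes "bounded_linear x'"
  shows "x' (c *\<^sub>R z) = c * x' z"
  using linear_scale[OF bounded_linear.linear[OF assms]] by simp

lemma pettis_integrable_measurable:
  fixes x' :: "'b::real_normed_vector \<Rightarrow> real"
  shows "pettis_integrable M \<Phi> \<Longrightarrow> bounded_linear x' \<Longrightarrow> (\<lambda>\<omega>. x' (\<Phi> \<omega>)) \<in> borel_measurable M"
  unfolding pettis_integrable_def weakly_measurable_def by blast

lemma pettis_integrable_integrable:
  fixes x' :: "'b::real_normed_vector \<Rightarrow> real"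
  shows "pettis_integrable M \<Phi> \<Longrightarrow> bounded_linear x' \<Longrightarrow> integrable M (\<lambda>\<omega>. x' (\<Phi> \<omega>))"
  unfolding pettis_integrable_def by blast

lemma bounded_linear_functionals_separate:
  fixes x y :: "'b::real_normed_vector"
  assumes "\<And>f::'b \<Rightarrow> real. bounded_linear f \<Longrightarrow> f x = f y"
  shows "x = y"
proof -
  obtain f :: "'b \<Rightarrow> real" where f: "bounded_linear f" "f (x - y) = norm (x - y)"
    using exists_norming_functional by metis
  then have "norm (x - y) = f x - f y"
    by (simp add: linear_diff bounded_linear.linear)
  then show ?thesis
    using assms[OF f(1)] by simp
qed

lemma pettis_integral_functional:
  fixes \<Phi> :: "'a \<Rightarrow> 'b::real_normed_vector" and x' :: "'b \<Rightarrow> real"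
  assumes "pettis_integrable M \<Phi>" "D \<in> sets M" "bounded_linear x'"
  shows "x' (pettis_integral M D \<Phi>) = (LINT \<omega>:D|M. x' (\<Phi> \<omega>))"
proof -
  let ?P = "\<lambda>v. \<forall>x'::'b \<Rightarrow> real. bounded_linear x' \<longrightarrow> x' v = (LINT \<omega>:D|M. x' (\<Phi> \<omega>))"
  have "\<forall>D\<in>sets M. \<exists>v. \<forall>x'::'b \<Rightarrow> real. bounded_linear x' \<longrightarrow> x' v = (LINT \<omega>:D|M. x' (\<Phi> \<omega>))"
    using assms(1) unfolding pettis_integrable_def by (elim conjE)
  then obtain v where v: "?P v"
    using assms(2) by blast
  have "pettis_integral M D \<Phi> = v"
    unfolding pettis_integral_def
  proof (rule the_equality)
    fix w assume w: "?P w"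
    show "w = v"
    proof (rule bounded_linear_functionals_separate)
      fix f :: "'b \<Rightarrow> real" assume "bounded_linear f"
      then show "f w = f v"
        using v w by metis
    qed
  qed (rule v)
  then show ?thesis
    using v assms(3) by blast
qed

lemma pettis_integral_cong:
  fixes \<Phi> \<Psi> :: "'a \<Rightarrow> 'b::real_normed_vector"
  assumes "\<And>x'::'b \<Rightarrow> real. bounded_linear x' \<Longrightarrow>
    (LINT \<omega>:D|M. x' (\<Phi> \<omega>)) = (LINT \<omega>:D|M. x' (\<Psi> \<omega>))"
  shows "pettis_integral M D \<Phi> = pettis_integral M D \<Psi>"
  unfolding pettis_integral_def using assms by simp

lemma bounded_pettis_integrals:
  fixes g :: "'a \<Rightarrow> 'b::real_normed_vector"
  assumes "pettis_integrable M g"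
  shows "bounded ((\<lambda>E. pettis_integral M E g) ` sets M)"
proof (rule weakly_bounded_imp_bounded)
  fix f :: "'b \<Rightarrow> real" assume f: "bounded_linear f"
  have "\<bar>f (pettis_integral M E g)\<bar> \<le> (\<integral>\<omega>. \<bar>f (g \<omega>)\<bar> \<partial>M)" if E: "E \<in> sets M" for E
  proof -
    have int: "integrable M (\<lambda>\<omega>. f (g \<omega>))"
      using pettis_integrable_integrable[OF assms f] .
    have "\<bar>LINT \<omega>:E|M. f (g \<omega>)\<bar> \<le> (\<integral>\<omega>. \<bar>indicator E \<omega> * f (g \<omega>)\<bar> \<partial>M)"
      using integral_norm_bound[of M "\<lambda>\<omega>. indicator E \<omega> * f (g \<omega>)"]
      by (simp add: set_lebesgue_integral_def)
    also have "\<dots> \<le> (\<integral>\<omega>. \<bar>f (g \<omega>)\<bar> \<partial>M)"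
      using int integrable_real_mult_indicator[OF E int]
      by (intro integral_mono integrable_abs) (auto split: split_indicator simp: mult.commute)
    finally show ?thesis
      using pettis_integral_functional[OF assms E f] by simp
  qed
  then show "\<exists>k. \<forall>y\<in>(\<lambda>E. pettis_integral M E g) ` sets M. \<bar>f y\<bar> \<le> k"
    by blast
qed

lemma pettis_integrable_L1_bound:
  fixes g :: "'a \<Rightarrow> 'b::real_normed_vector"
  assumes pg: "pettis_integrable M g"
  obtains B where "\<And>f::'b \<Rightarrow> real. bounded_linear f \<Longrightarrow> (\<And>y. \<bar>f y\<bar> \<le> norm y) \<Longrightarrow>
    (\<integral>\<omega>. \<bar>f (g \<omega>)\<bar> \<partial>M) \<le> B"
proof -
  obtain K where K: "\<And>E. E \<in> sets M \<Longrightarrow> norm (pettis_integral M E g) \<le> K"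
    using bounded_pettis_integrals[OF pg] by (auto simp: bounded_iff)
  have "(\<integral>\<omega>. \<bar>f (g \<omega>)\<bar> \<partial>M) \<le> 2 * K"
    if f: "bounded_linear f" "\<And>y. \<bar>f y\<bar> \<le> norm y" for f :: "'b \<Rightarrow> real"
  proof -
    define v where "v \<omega> = f (g \<omega>)" for \<omega>
    have v: "integrable M v" "v \<in> borel_measurable M"
      unfolding v_def using pettis_integrable_integrable[OF pg f(1)]
        pettis_integrable_measurable[OF pg f(1)] by auto
    define P where "P = {\<omega>\<in>space M. 0 \<le> v \<omega>}"
    have P: "P \<in> sets M" "space M - P \<in> sets M"
      unfolding P_def using v(2) by measurable
    have set_integral_le: "\<bar>LINT \<omega>:E|M. v \<omega>\<bar> \<le> K" if "E \<in> sets M" for E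
      using pettis_integral_functional[OF pg that f(1)] f(2) K[OF that] unfolding v_def
      by (metis order.trans)
    have "(\<integral>\<omega>. \<bar>v \<omega>\<bar> \<partial>M) = (\<integral>\<omega>. indicator P \<omega> * v \<omega> - indicator (space M - P) \<omega> * v \<omega> \<partial>M)"
      by (rule Bochner_Integration.integral_cong) (auto simp: P_def split: split_indicator)
    also have "\<dots> = (LINT \<omega>:P|M. v \<omega>) - (LINT \<omega>:(space M - P)|M. v \<omega>)"
      using integrable_real_mult_indicator[OF P(1) v(1)] integrable_real_mult_indicator[OF P(2) v(1)]
      by (simp add: set_lebesgue_integral_def mult.commute)
    also have "\<dots> \<le> 2 * K"
      using set_integral_le[OF P(1)] set_integral_le[OF P(2)] by linarith
    finally show ?thesis
      unfolding v_def .
  qed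
  then show ?thesis
    using that by blast
qed

section \<open>Multiplication by bounded measurable functions\<close>

lemma staircase_approx:
  fixes x :: real and m :: nat
  assumes "0 \<le> x" "x \<le> 1" "0 < m"
  shows "\<bar>x - (\<Sum>k\<le>m. real k / real m * indicator {t. nat \<lfloor>real m * t\<rfloor> = k} x)\<bar> \<le> 1 / real m"
proof -
  let ?k = "nat \<lfloor>real m * x\<rfloor>"
  have "0 \<le> real m * x" "real m * x \<le> real m"
    using assms by (simp_all add: mult_left_le)
  then have k: "real ?k \<le> real m * x" "real m * x < real ?k + 1" "?k \<le> m"
    by linarith+
  have "(\<Sum>k\<le>m. real k / real m * indicator {t. nat \<lfloor>real m * t\<rfloor> = k} x)
      = (\<Sum>k\<le>m. if k = ?k then real k / real m else 0)"
    by (intro sum.cong) (auto split: split_indicator)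
  also have "\<dots> = real ?k / real m"
    using k(3) by (subst sum.delta[OF finite_atMost]) simp
  finally show ?thesis
    using k(1,2) assms(3) by (simp add: field_simps abs_le_iff)
qed

lemma Cauchy_dist_le_inverse_Suc:
  fixes y :: "nat \<Rightarrow> 'a::metric_space"
  assumes "\<And>m n. dist (y m) (y n) \<le> B / real (Suc m) + B / real (Suc n)"
  shows "Cauchy y"
proof (rule metric_CauchyI)
  fix e :: real assume "0 < e"
  obtain N :: nat where "2 * \<bar>B\<bar> / e < real N"
    using reals_Archimedean2 by blast
  then have "2 * (\<bar>B\<bar> / real (Suc N)) < e"
    using \<open>0 < e\<close> by (simp add: field_simps)
  moreover have tail: "B / real (Suc k) \<le> \<bar>B\<bar> / real (Suc N)" if "N \<le> k" for k
  proof -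
    have "B / real (Suc k) \<le> \<bar>B\<bar> / real (Suc k)"
      by (simp add: divide_right_mono)
    also have "\<dots> \<le> \<bar>B\<bar> / real (Suc N)"
      using that by (intro divide_left_mono) auto
    finally show ?thesis .
  qed
  ultimately have "dist (y m) (y n) < e" if "N \<le> m" "N \<le> n" for m n
    using assms[of m n] tail[OF that(1)] tail[OF that(2)] by linarith
  then show "\<exists>N. \<forall>m\<ge>N. \<forall>n\<ge>N. dist (y m) (y n) < e" by blast
qed

lemma exists_vector_of_uniform_weak_approximation:
  fixes y :: "nat \<Rightarrow> 'b::banach" and L C :: "('b \<Rightarrow> real) \<Rightarrow> real"
  assumes approx: "\<And>f n. bounded_linear f \<Longrightarrow> \<bar>f (y n) - L f\<bar> \<le> C f / real (Suc n)"
    and bound: "\<And>f. bounded_linear f \<Longrightarrow> (\<And>z. \<bar>f z\<bar> \<le> norm z) \<Longrightarrow> C f \<le> B"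
  obtains v where "\<And>f. bounded_linear f \<Longrightarrow> f v = L f"
proof -
  have dist_le: "dist (y m) (y n) \<le> B / real (Suc m) + B / real (Suc n)" for m n
  proof -
    obtain f :: "'b \<Rightarrow> real" where f: "bounded_linear f" "\<And>z. \<bar>f z\<bar> \<le> norm z"
      "f (y m - y n) = norm (y m - y n)"
      using exists_norming_functional by metis
    have "dist (y m) (y n) = (f (y m) - L f) - (f (y n) - L f)"
      using f(1,3) by (simp add: dist_norm linear_diff bounded_linear.linear)
    also have "\<dots> \<le> C f / real (Suc m) + C f / real (Suc n)"
      using approx[OF f(1), of m] approx[OF f(1), of n] by linarith
    also have "\<dots> \<le> B / real (Suc m) + B / real (Suc n)"
      using bound[OF f(1,2)] by (intro add_mono divide_right_mono) auto
    finally show ?thesis .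
  qed
  then have "Cauchy y"
    by (rule Cauchy_dist_le_inverse_Suc)
  then obtain v where v: "y \<longlonglongrightarrow> v"
    using Cauchy_convergent_iff convergent_def by blast
  have "f v = L f" if f: "bounded_linear f" for f
  proof (rule LIMSEQ_unique)
    show "(\<lambda>n. f (y n)) \<longlonglongrightarrow> f v"
      using bounded_linear.tendsto[OF f v] .
    have "(\<lambda>n. f (y n) - L f) \<longlonglongrightarrow> 0"
    proof (rule Lim_null_comparison)
      show "\<forall>\<^sub>F n in sequentially. norm (f (y n) - L f) \<le> C f * inverse (real (Suc n))"
        using approx[OF f] by (simp add: divide_inverse)
      show "(\<lambda>n. C f * inverse (real (Suc n))) \<longlonglongrightarrow> 0"
        using tendsto_mult_right_zero[OF LIMSEQ_inverse_real_of_nat] by simp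
    qed
    then show "(\<lambda>n. f (y n)) \<longlonglongrightarrow> L f"
      by (rule LIM_zero_cancel)
  qed
  then show ?thesis using that by blast
qed

lemma pettis_integral_sum_functional:
  fixes g :: "'a \<Rightarrow> 'b::real_normed_vector" and x' :: "'b \<Rightarrow> real"
  assumes pg: "pettis_integrable M g" and "finite K" and E: "\<And>k. k \<in> K \<Longrightarrow> E k \<in> sets M"
    and x': "bounded_linear x'"
  shows "integrable M (\<lambda>\<omega>. (\<Sum>k\<in>K. c k * indicator (E k) \<omega>) * x' (g \<omega>))"
    and "x' (\<Sum>k\<in>K. c k *\<^sub>R pettis_integral M (E k) g)
      = (\<integral>\<omega>. (\<Sum>k\<in>K. c k * indicator (E k) \<omega>) * x' (g \<omega>) \<partial>M)"
proof -
  have sum_eq: "(\<lambda>\<omega>. (\<Sum>k\<in>K. c k * indicator (E k) \<omega>) * x' (g \<omega>))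
      = (\<lambda>\<omega>. \<Sum>k\<in>K. c k * (indicator (E k) \<omega> * x' (g \<omega>)))"
    by (simp add: sum_distrib_right mult.assoc)
  have int: "integrable M (\<lambda>\<omega>. indicator (E k) \<omega> * x' (g \<omega>))" if "k \<in> K" for k
    using integrable_real_mult_indicator[OF E[OF that] pettis_integrable_integrable[OF pg x']]
    by (simp add: mult.commute)
  then show "integrable M (\<lambda>\<omega>. (\<Sum>k\<in>K. c k * indicator (E k) \<omega>) * x' (g \<omega>))"
    unfolding sum_eq by (intro Bochner_Integration.integrable_sum integrable_mult_right)
  have lin: "linear x'"
    using x' bounded_linear.linear by blast
  have "x' (\<Sum>k\<in>K. c k *\<^sub>R pettis_integral M (E k) g) = (\<Sum>k\<in>K. c k * x' (pettis_integral M (E k) g))"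
    by (simp add: linear_sum[OF lin] linear_cmul[OF lin])
  also have "\<dots> = (\<Sum>k\<in>K. c k * (\<integral>\<omega>. indicator (E k) \<omega> * x' (g \<omega>) \<partial>M))"
    using pettis_integral_functional[OF pg E x'] by (simp add: set_lebesgue_integral_def)
  also have "\<dots> = (\<integral>\<omega>. (\<Sum>k\<in>K. c k * indicator (E k) \<omega>) * x' (g \<omega>) \<partial>M)"
    unfolding sum_eq using int by (simp add: Bochner_Integration.integral_sum)
  finally show "x' (\<Sum>k\<in>K. c k *\<^sub>R pettis_integral M (E k) g)
      = (\<integral>\<omega>. (\<Sum>k\<in>K. c k * indicator (E k) \<omega>) * x' (g \<omega>) \<partial>M)" .
qed

lemma abs_integral_diff_mult_le:
  fixes a b u :: "'a \<Rightarrow> real"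
  assumes "integrable M u" "integrable M (\<lambda>\<omega>. a \<omega> * u \<omega>)" "integrable M (\<lambda>\<omega>. b \<omega> * u \<omega>)"
    and "\<And>\<omega>. \<omega> \<in> space M \<Longrightarrow> \<bar>a \<omega> - b \<omega>\<bar> \<le> e"
  shows "\<bar>(\<integral>\<omega>. a \<omega> * u \<omega> \<partial>M) - (\<integral>\<omega>. b \<omega> * u \<omega> \<partial>M)\<bar> \<le> e * (\<integral>\<omega>. \<bar>u \<omega>\<bar> \<partial>M)"
proof -
  have int: "integrable M (\<lambda>\<omega>. (a \<omega> - b \<omega>) * u \<omega>)"
    using assms(2,3) by (simp add: left_diff_distrib)
  have "\<bar>(\<integral>\<omega>. a \<omega> * u \<omega> \<partial>M) - (\<integral>\<omega>. b \<omega> * u \<omega> \<partial>M)\<bar> = \<bar>\<integral>\<omega>. (a \<omega> - b \<omega>) * u \<omega> \<partial>M\<bar>"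
    using assms(2,3) by (simp add: left_diff_distrib)
  also have "\<dots> \<le> (\<integral>\<omega>. \<bar>(a \<omega> - b \<omega>) * u \<omega>\<bar> \<partial>M)"
    using integral_norm_bound[of M "\<lambda>\<omega>. (a \<omega> - b \<omega>) * u \<omega>"] by simp
  also have "\<dots> \<le> (\<integral>\<omega>. e * \<bar>u \<omega>\<bar> \<partial>M)"
    using int assms(1,4)
    by (intro integral_mono integrable_abs integrable_mult_right)
      (auto simp: abs_mult intro: mult_right_mono)
  finally show ?thesis
    by simp
qed

lemma exists_pettis_integral_mult:
  fixes g :: "'a \<Rightarrow> 'b::banach" and h :: "'a \<Rightarrow> real"
  assumes pg: "pettis_integrable M g" and hm: "h \<in> borel_measurable M"
    and h01: "\<And>\<omega>. \<omega> \<in> space M \<Longrightarrow> 0 \<le> h \<omega> \<and> h \<omega> \<le> 1"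
  obtains v where "\<And>x'. bounded_linear x' \<Longrightarrow> x' v = (\<integral>\<omega>. h \<omega> * x' (g \<omega>) \<partial>M)"
proof -
  obtain B where B: "\<And>f::'b \<Rightarrow> real. bounded_linear f \<Longrightarrow> (\<And>y. \<bar>f y\<bar> \<le> norm y) \<Longrightarrow>
      (\<integral>\<omega>. \<bar>f (g \<omega>)\<bar> \<partial>M) \<le> B"
    using pettis_integrable_L1_bound[OF pg] by metis
  define E where "E n k = {\<omega>\<in>space M. nat \<lfloor>real (Suc n) * h \<omega>\<rfloor> = k}" for n k
  define s where "s n \<omega> = (\<Sum>k\<le>Suc n. real k / real (Suc n) * indicator (E n k) \<omega>)" for n \<omega>
  define y where "y n = (\<Sum>k\<le>Suc n. (real k / real (Suc n)) *\<^sub>R pettis_integral M (E n k) g)" for n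
  have E: "E n k \<in> sets M" for n k
    unfolding E_def using hm by measurable
  have s_approx: "\<bar>h \<omega> - s n \<omega>\<bar> \<le> 1 / real (Suc n)" if "\<omega> \<in> space M" for n \<omega>
  proof -
    have "s n \<omega> = (\<Sum>k\<le>Suc n. real k / real (Suc n) * indicator {t. nat \<lfloor>real (Suc n) * t\<rfloor> = k} (h \<omega>))"
      unfolding s_def E_def using that by (intro sum.cong) (auto split: split_indicator)
    then show ?thesis
      using staircase_approx[of "h \<omega>" "Suc n"] h01[OF that] by simp
  qed
  have approx: "\<bar>f (y n) - (\<integral>\<omega>. h \<omega> * f (g \<omega>) \<partial>M)\<bar> \<le> (\<integral>\<omega>. \<bar>f (g \<omega>)\<bar> \<partial>M) / real (Suc n)"
    if f: "bounded_linear f" for f n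
  proof -
    have fg: "integrable M (\<lambda>\<omega>. f (g \<omega>))"
      using pettis_integrable_integrable[OF pg f] .
    have "integrable M (\<lambda>\<omega>. h \<omega> * f (g \<omega>))"
      using fg hm pettis_integrable_measurable[OF pg f] h01
      by (intro Bochner_Integration.integrable_bound[OF fg]) (auto simp: abs_mult intro!: mult_left_le_one_le)
    moreover have "f (y n) = (\<integral>\<omega>. s n \<omega> * f (g \<omega>) \<partial>M)" "integrable M (\<lambda>\<omega>. s n \<omega> * f (g \<omega>))"
      using pettis_integral_sum_functional[OF pg finite_atMost _ f,
          where E = "E n" and c = "\<lambda>k. real k / real (Suc n)"] E
      unfolding y_def s_def by blast+
    ultimately show ?thesis
      using abs_integral_diff_mult_le[OF fg, of h "s n" "1 / real (Suc n)"] s_approx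
      by (simp add: abs_minus_commute)
  qed
  show ?thesis
  proof (rule exists_vector_of_uniform_weak_approximation)
    show "\<bar>f (y n) - (\<integral>\<omega>. h \<omega> * f (g \<omega>) \<partial>M)\<bar> \<le> (\<integral>\<omega>. \<bar>f (g \<omega>)\<bar> \<partial>M) / real (Suc n)"
      if "bounded_linear f" for f n
      using approx[OF that] .
  qed (use B that in auto)
qed

section \<open>Conditional expectations\<close>

lemma weakly_measurable_scaleR:
  fixes \<phi> :: "'a \<Rightarrow> real" and \<Psi> :: "'a \<Rightarrow> 'b::real_normed_vector"
  assumes "\<phi> \<in> borel_measurable M" "weakly_measurable M \<Psi>"
  shows "weakly_measurable M (\<lambda>\<omega>. \<phi> \<omega> *\<^sub>R \<Psi> \<omega>)"
  unfolding weakly_measurable_def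
proof (intro allI impI)
  fix x' :: "'b \<Rightarrow> real" assume x': "bounded_linear x'"
  have "(\<lambda>\<omega>. x' (\<Psi> \<omega>)) \<in> borel_measurable M"
    using assms(2) x' unfolding weakly_measurable_def by blast
  then have "(\<lambda>\<omega>. \<phi> \<omega> * x' (\<Psi> \<omega>)) \<in> borel_measurable M"
    using assms(1) by measurable
  then show "(\<lambda>\<omega>. x' (\<phi> \<omega> *\<^sub>R \<Psi> \<omega>)) \<in> borel_measurable M"
    by (simp add: bounded_linear_functional_scaleR[OF x'])
qed

lemma set_integral_restr_to_subalg:
  fixes f :: "'a \<Rightarrow> real"
  assumes "subalgebra M F" "f \<in> borel_measurable F" "E \<in> sets F"
  shows "(LINT \<omega>:E|restr_to_subalg M F. f \<omega>) = (LINT \<omega>:E|M. f \<omega>)"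
  unfolding set_lebesgue_integral_def
  by (rule integral_subalgebra2[OF assms(1)]) (use assms(2,3) in measurable)

context sigma_finite_subalgebra
begin

lemma pettis_integrable_restr_to_subalgI:
  fixes g \<Phi> :: "'a \<Rightarrow> 'b::real_normed_vector"
  assumes p\<Phi>: "pettis_integrable M \<Phi>" and gF: "weakly_measurable F g"
    and int: "\<And>x'::'b \<Rightarrow> real. bounded_linear x' \<Longrightarrow> integrable M (\<lambda>\<omega>. x' (g \<omega>))"
    and same: "\<And>(x'::'b \<Rightarrow> real) E. bounded_linear x' \<Longrightarrow> E \<in> sets F \<Longrightarrow>
      (LINT \<omega>:E|M. x' (\<Phi> \<omega>)) = (LINT \<omega>:E|M. x' (g \<omega>))"
  shows "pettis_integrable (restr_to_subalg M F) g"
proof -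
  have meas: "(\<lambda>\<omega>. x' (g \<omega>)) \<in> borel_measurable F" if "bounded_linear x'" for x' :: "'b \<Rightarrow> real"
    using gF that unfolding weakly_measurable_def by blast
  have "x' (pettis_integral M E \<Phi>) = (LINT \<omega>:E|restr_to_subalg M F. x' (g \<omega>))"
    if "bounded_linear x'" "E \<in> sets F" for x' :: "'b \<Rightarrow> real" and E
  proof -
    have "E \<in> sets M"
      using that(2) subalg by (auto simp: subalgebra_def)
    then show ?thesis
      using pettis_integral_functional[OF p\<Phi> _ that(1)] same[OF that]
        set_integral_restr_to_subalg[OF subalg meas[OF that(1)] that(2)] by simp
  qed
  moreover have "integrable (restr_to_subalg M F) (\<lambda>\<omega>. x' (g \<omega>))"
    if "bounded_linear x'" for x' :: "'b \<Rightarrow> real"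
    using integrable_in_subalg[OF subalg meas[OF that] int[OF that]] .
  ultimately show ?thesis
    unfolding pettis_integrable_def weakly_measurable_def sets_restr_to_subalg[OF subalg]
    using meas measurable_in_subalg[OF subalg] by blast
qed

lemma pettis_cond_exp_functional:
  fixes \<Phi> \<Psi> :: "'a \<Rightarrow> 'b::real_normed_vector" and x' :: "'b \<Rightarrow> real"
  assumes p\<Phi>: "pettis_integrable M \<Phi>" and ce: "is_pettis_cond_exp M F \<Phi> \<Psi>"
    and x': "bounded_linear x'"
  shows "AE \<omega> in M. real_cond_exp M F (\<lambda>\<omega>. x' (\<Phi> \<omega>)) \<omega> = x' (\<Psi> \<omega>)"
proof (rule real_cond_exp_charact)
  have p\<Psi>: "pettis_integrable M \<Psi>"
    using ce unfolding is_pettis_cond_exp_def by blast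
  show "(\<lambda>\<omega>. x' (\<Psi> \<omega>)) \<in> borel_measurable F"
    using ce x' unfolding is_pettis_cond_exp_def weakly_measurable_def by blast
  show "integrable M (\<lambda>\<omega>. x' (\<Phi> \<omega>))" "integrable M (\<lambda>\<omega>. x' (\<Psi> \<omega>))"
    using pettis_integrable_integrable[OF _ x'] p\<Phi> p\<Psi> by blast+
  fix E assume E: "E \<in> sets F"
  then have "E \<in> sets M"
    using subalg by (auto simp: subalgebra_def)
  then show "(LINT \<omega>:E|M. x' (\<Phi> \<omega>)) = (LINT \<omega>:E|M. x' (\<Psi> \<omega>))"
    using ce E pettis_integral_functional[OF p\<Phi> _ x'] pettis_integral_functional[OF p\<Psi> _ x']
    unfolding is_pettis_cond_exp_def by metis
qed

lemma pettis_cond_exp_mult_functional: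
  fixes \<Phi> \<Psi> :: "'a \<Rightarrow> 'b::real_normed_vector" and x' :: "'b \<Rightarrow> real" and \<phi> :: "'a \<Rightarrow> real"
  assumes p\<Phi>: "pettis_integrable M \<Phi>" and ce: "is_pettis_cond_exp M F \<Phi> \<Psi>"
    and \<phi>: "\<phi> \<in> borel_measurable F" and p\<phi>\<Phi>: "pettis_integrable M (\<lambda>\<omega>. \<phi> \<omega> *\<^sub>R \<Phi> \<omega>)"
    and x': "bounded_linear x'"
  shows "integrable M (\<lambda>\<omega>. x' (\<phi> \<omega> *\<^sub>R \<Psi> \<omega>))"
    and "E \<in> sets F \<Longrightarrow> (LINT \<omega>:E|M. x' (\<phi> \<omega> *\<^sub>R \<Phi> \<omega>)) = (LINT \<omega>:E|M. x' (\<phi> \<omega> *\<^sub>R \<Psi> \<omega>))"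
proof -
  note scaleR = bounded_linear_functional_scaleR[OF x']
  have int: "integrable M (\<lambda>\<omega>. \<phi> \<omega> * x' (\<Phi> \<omega>))"
    using pettis_integrable_integrable[OF p\<phi>\<Phi> x'] by (simp add: scaleR)
  have "(\<lambda>\<omega>. x' (\<Psi> \<omega>)) \<in> borel_measurable F"
    using ce x' unfolding is_pettis_cond_exp_def weakly_measurable_def by blast
  then have "(\<lambda>\<omega>. \<phi> \<omega> * x' (\<Psi> \<omega>)) \<in> borel_measurable F"
    using \<phi> by measurable
  then have [measurable]: "(\<lambda>\<omega>. \<phi> \<omega> * x' (\<Psi> \<omega>)) \<in> borel_measurable M"
    using measurable_from_subalg[OF subalg] by blast
  have "AE \<omega> in M. real_cond_exp M F (\<lambda>\<omega>. \<phi> \<omega> * x' (\<Phi> \<omega>)) \<omega>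
      = \<phi> \<omega> * real_cond_exp M F (\<lambda>\<omega>. x' (\<Phi> \<omega>)) \<omega>"
    using \<phi> pettis_integrable_measurable[OF p\<Phi> x'] int by (intro real_cond_exp_mult)
  then have ae: "AE \<omega> in M. real_cond_exp M F (\<lambda>\<omega>. \<phi> \<omega> * x' (\<Phi> \<omega>)) \<omega> = \<phi> \<omega> * x' (\<Psi> \<omega>)"
    using pettis_cond_exp_functional[OF p\<Phi> ce x'] by eventually_elim simp
  have "integrable M (\<lambda>\<omega>. \<phi> \<omega> * x' (\<Psi> \<omega>))"
    using real_cond_exp_int(1)[OF int] _ ae by (rule integrable_cong_AE_imp) measurable
  then show "integrable M (\<lambda>\<omega>. x' (\<phi> \<omega> *\<^sub>R \<Psi> \<omega>))"
    by (simp add: scaleR)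
  assume E: "E \<in> sets F"
  then have [measurable]: "E \<in> sets M"
    using subalg by (auto simp: subalgebra_def)
  have "(LINT \<omega>:E|M. \<phi> \<omega> * x' (\<Phi> \<omega>))
      = (LINT \<omega>:E|M. real_cond_exp M F (\<lambda>\<omega>. \<phi> \<omega> * x' (\<Phi> \<omega>)) \<omega>)"
    by (rule real_cond_exp_intA[OF int E])
  also have "\<dots> = (LINT \<omega>:E|M. \<phi> \<omega> * x' (\<Psi> \<omega>))"
    unfolding set_lebesgue_integral_def
    using ae by (intro integral_cong_AE) (measurable, auto)
  finally show "(LINT \<omega>:E|M. x' (\<phi> \<omega> *\<^sub>R \<Phi> \<omega>)) = (LINT \<omega>:E|M. x' (\<phi> \<omega> *\<^sub>R \<Psi> \<omega>))"
    by (simp add: scaleR)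
qed

end

context finite_measure_subalgebra
begin

lemma exists_unit_cond_exp_indicator:
  assumes D: "D \<in> sets M"
  obtains h :: "'a \<Rightarrow> real" where "h \<in> borel_measurable F" "\<And>\<omega>. 0 \<le> h \<omega> \<and> h \<omega> \<le> 1"
    and "\<And>f :: 'a \<Rightarrow> real. f \<in> borel_measurable F \<Longrightarrow> integrable M f \<Longrightarrow>
      (\<integral>\<omega>. h \<omega> * f \<omega> \<partial>M) = (LINT \<omega>:D|M. f \<omega>)"
proof -
  \<comment> \<open>clipping makes 0 \<le> h \<le> 1 hold everywhere, not only almost everywhere\<close>
  define h0 where "h0 = real_cond_exp M F (indicator D)"
  define h where "h \<omega> = max 0 (min 1 (h0 \<omega>))" for \<omega>
  have "integrable M (indicator D :: 'a \<Rightarrow> real)"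
    using D by (intro integrable_real_indicator) (simp_all add: less_top[symmetric])
  then have "AE \<omega> in M. 0 \<le> h0 \<omega>" "AE \<omega> in M. h0 \<omega> \<le> 1"
    unfolding h0_def by (intro real_cond_exp_ge_c real_cond_exp_le_c; simp split: split_indicator)+
  then have h_h0: "AE \<omega> in M. h \<omega> = h0 \<omega>"
    unfolding h_def by eventually_elim simp
  have hF: "h \<in> borel_measurable F"
    unfolding h_def h0_def by measurable
  have "(\<integral>\<omega>. h \<omega> * f \<omega> \<partial>M) = (LINT \<omega>:D|M. f \<omega>)"
    if fF: "f \<in> borel_measurable F" and f: "integrable M f" for f :: "'a \<Rightarrow> real"
  proof -
    have [measurable]: "h \<in> borel_measurable M" "f \<in> borel_measurable M"
      using hF fF measurable_from_subalg[OF subalg] by blast+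
    have "(\<integral>\<omega>. h \<omega> * f \<omega> \<partial>M) = (\<integral>\<omega>. f \<omega> * h0 \<omega> \<partial>M)"
      using h_h0 unfolding h0_def by (intro integral_cong_AE) (measurable, auto)
    also have "\<dots> = (\<integral>\<omega>. f \<omega> * indicator D \<omega> \<partial>M)"
      unfolding h0_def using integrable_real_mult_indicator[OF D f] fF D
      by (intro real_cond_exp_intg(2)) (auto simp: mult.commute)
    finally show ?thesis
      by (simp add: set_lebesgue_integral_def mult.commute)
  qed
  with hF show ?thesis
    using that unfolding h_def by fastforce
qed

lemma pettis_integrable_of_restr_to_subalg:
  fixes g :: "'a \<Rightarrow> 'b::banach"
  assumes pg: "pettis_integrable (restr_to_subalg M F) g"
  shows "pettis_integrable M g"
proof -
  have gF: "(\<lambda>\<omega>. x' (g \<omega>)) \<in> borel_measurable F" if "bounded_linear x'" for x' :: "'b \<Rightarrow> real"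
    using measurable_in_subalg'[OF subalg pettis_integrable_measurable[OF pg that]] .
  have int: "integrable M (\<lambda>\<omega>. x' (g \<omega>))" if "bounded_linear x'" for x' :: "'b \<Rightarrow> real"
    using integrable_from_subalg[OF subalg pettis_integrable_integrable[OF pg that]] .
  have "\<exists>v. \<forall>x'::'b \<Rightarrow> real. bounded_linear x' \<longrightarrow> x' v = (LINT \<omega>:D|M. x' (g \<omega>))"
    if D: "D \<in> sets M" for D
  proof -
    obtain h :: "'a \<Rightarrow> real" where hF: "h \<in> borel_measurable F"
      and h01: "\<And>\<omega>. 0 \<le> h \<omega> \<and> h \<omega> \<le> 1"
      and h: "\<And>f :: 'a \<Rightarrow> real. f \<in> borel_measurable F \<Longrightarrow> integrable M f \<Longrightarrow>
        (\<integral>\<omega>. h \<omega> * f \<omega> \<partial>M) = (LINT \<omega>:D|M. f \<omega>)"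
      using exists_unit_cond_exp_indicator[OF D] by blast
    obtain v where v: "\<And>x'. bounded_linear x' \<Longrightarrow>
        x' v = (\<integral>\<omega>. h \<omega> * x' (g \<omega>) \<partial>restr_to_subalg M F)"
      using exists_pettis_integral_mult[OF pg measurable_in_subalg[OF subalg hF]] h01 by blast
    have "x' v = (LINT \<omega>:D|M. x' (g \<omega>))" if x': "bounded_linear x'" for x' :: "'b \<Rightarrow> real"
    proof -
      have "x' v = (\<integral>\<omega>. h \<omega> * x' (g \<omega>) \<partial>M)"
        unfolding v[OF x'] using hF gF[OF x'] by (intro integral_subalgebra2[OF subalg]) measurable
      then show ?thesis
        using h[OF gF[OF x'] int[OF x']] by simp
    qed
    then show ?thesis by blast
  qed
  then show ?thesis
    unfolding pettis_integrable_def weakly_measurable_def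
    using gF measurable_from_subalg[OF subalg] int by blast
qed

end

theorem mainTheorem1:
  fixes M F :: "'a measure"
    and \<Phi> \<Psi> :: "'a \<Rightarrow> 'b::banach"
    and \<phi> :: "'a \<Rightarrow> real"
  assumes "finite_measure M"
    and "subalgebra M F"
    and "pettis_integrable M \<Phi>"
    and "is_pettis_cond_exp M F \<Phi> \<Psi>"
    and "\<phi> \<in> borel_measurable F"
    and "pettis_integrable M (\<lambda>\<omega>. \<phi> \<omega> *\<^sub>R \<Phi> \<omega>)"
  shows "is_pettis_cond_exp M F (\<lambda>\<omega>. \<phi> \<omega> *\<^sub>R \<Phi> \<omega>) (\<lambda>\<omega>. \<phi> \<omega> *\<^sub>R \<Psi> \<omega>)"
proof -
  interpret finite_measure_subalgebra M F
    using assms(1,2) by (simp add: finite_measure_subalgebra_def finite_measure_subalgebra_axioms_def)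
  note functional = pettis_cond_exp_mult_functional[OF assms(3-6)]
  have weakly_F: "weakly_measurable F (\<lambda>\<omega>. \<phi> \<omega> *\<^sub>R \<Psi> \<omega>)"
    using weakly_measurable_scaleR assms(4,5) unfolding is_pettis_cond_exp_def by blast
  have "pettis_integrable M (\<lambda>\<omega>. \<phi> \<omega> *\<^sub>R \<Psi> \<omega>)"
    using functional
    by (intro pettis_integrable_of_restr_to_subalg pettis_integrable_restr_to_subalgI[OF assms(6) weakly_F])
  moreover have "pettis_integral M E (\<lambda>\<omega>. \<phi> \<omega> *\<^sub>R \<Phi> \<omega>) = pettis_integral M E (\<lambda>\<omega>. \<phi> \<omega> *\<^sub>R \<Psi> \<omega>)"
    if "E \<in> sets F" for E
    using functional(2) that by (intro pettis_integral_cong)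
  ultimately show ?thesis
    unfolding is_pettis_cond_exp_def using weakly_F by blast
qed

end
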